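(* Let $\phi:\mathbb N\setminus\{0\}\to\mathbb N\setminus\{0\}$ satisfy $\phi(n)/n\to0$. Let $(Z_i)$ be i.i.d. $\mathbb R^d$-valued random variables with $Z_1$ satisfying (A1) and (A2). Then $\bar Z_n^\phi=\frac1n\sum_{i=1}^{\phi(n)}Z_i$ satisfies the LDP in $\mathbb R^d$ with good rate function $I(y)=\Delta^*(y\mid\mathcal D_Z)$.
   Context: $\Delta^*(y\mid A)=\sup_{\theta\in A}\langle y,\theta\rangle$. $\mathcal D_Z=\{\theta\in\mathbb R^d:\log\mathbb E\,e^{\langle\theta,Z_1\rangle}<\infty\}$. (A1): $\mathbb E\,e^{\alpha|Z_1|}<\infty$ for some $\alpha>0$ and $Z_1/n$ satisfies the LDP with a good rate function $I$. (A2): $I(z)=\Delta^*(z\mid\mathcal D_Z)$. *)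

theory Defs
  imports "HOL-Probability.Probability"
begin

definition eln :: "real \<Rightarrow> ereal" where
  "eln p = (if p > 0 then ereal (ln p) else -\<infinity>)"

definition good_rate_function :: "('a::topological_space \<Rightarrow> ereal) \<Rightarrow> bool" where
  "good_rate_function I \<longleftrightarrow> (\<forall>x. 0 \<le> I x) \<and> (\<forall>c::real. compact {x. I x \<le> ereal c})"

definition LDP :: "(nat \<Rightarrow> 'a::topological_space measure) \<Rightarrow> ('a \<Rightarrow> ereal) \<Rightarrow> bool" where
  "LDP \<mu> I \<longleftrightarrow>
     (\<forall>F. closed F \<longrightarrow>
        limsup (\<lambda>n. ereal (1 / real n) * eln (measure (\<mu> n) F)) \<le> - (INF x\<in>F. I x)) \<and>
     (\<forall>G. open G \<longrightarrow>
        - (INF x\<in>G. I x) \<le> liminf (\<lambda>n. ereal (1 / real n) * eln (measure (\<mu> n) G)))"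

definition support_fun :: "'a::real_inner \<Rightarrow> 'a set \<Rightarrow> ereal" where
  "support_fun y A = (SUP \<theta>\<in>A. ereal (y \<bullet> \<theta>))"

definition mgf_domain :: "'s measure \<Rightarrow> ('s \<Rightarrow> 'a::real_inner) \<Rightarrow> 'a set" where
  "mgf_domain M X = {\<theta>. (\<integral>\<^sup>+ \<omega>. ennreal (exp (\<theta> \<bullet> X \<omega>)) \<partial>M) < \<infinity>}"

end

theory Submission
  imports Defs
begin

(* Upper bound: for theta in the domain D_Z, Chernoff's inequality bounds the probability that
   Zbar_n lies in a small ball around y by (E exp <theta, Z_1>)^phi(n) * exp (-n (<theta, y> - eps)).
   Since phi(n) = o(n), the moment factor is only exp (o(n)), so taking the supremum over theta
   gives the local rate Delta*(y | D_Z) = I(y). The same estimate applied to alpha |Z_i| gives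
   exponential tightness, and compactness turns local bounds into bounds on closed sets.
   Lower bound: Zbar_n = Z_1/n + (Z_2 + ... + Z_phi(n))/n with independent summands; the second
   term is small with probability at least 1/2 by the Chernoff estimate, so the LDP lower bound
   of Z_1/n carries over to Zbar_n. *)

lemma eventually_power_le_exp_sublinear:
  fixes \<phi> :: "nat \<Rightarrow> nat"
  assumes lim: "(\<lambda>n. real (\<phi> n) / real n) \<longlonglongrightarrow> 0" and K: "K \<ge> 1" and \<epsilon>: "\<epsilon> > 0"
  shows "eventually (\<lambda>n. K ^ \<phi> n \<le> exp (real n * \<epsilon>)) sequentially"
proof -
  have "(\<lambda>n. real (\<phi> n) / real n * ln K) \<longlonglongrightarrow> 0"
    by (rule tendsto_mult_left_zero[OF lim])
  then have "eventually (\<lambda>n. real (\<phi> n) / real n * ln K < \<epsilon>) sequentially"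
    using \<epsilon> by (rule order_tendstoD)
  then show ?thesis
    using eventually_gt_at_top[of "0::nat"]
  proof eventually_elim
    case (elim n)
    have "K ^ \<phi> n = exp (real n * (real (\<phi> n) / real n * ln K))"
      using K elim(2) by (simp add: exp_of_nat_mult)
    also have "\<dots> \<le> exp (real n * \<epsilon>)"
      using elim by (intro exp_mono mult_left_mono) auto
    finally show ?case .
  qed
qed

lemma eventually_mult_exp_le_exp:
  assumes "b < a"
  shows "eventually (\<lambda>n. N * exp (- (real n * a)) \<le> exp (- (real n * b))) sequentially"
proof -
  have "(\<lambda>n. N * exp (- (a - b)) ^ n) \<longlonglongrightarrow> 0"
    using assms by (intro tendsto_mult_right_zero LIMSEQ_power_zero) auto
  then have "eventually (\<lambda>n. N * exp (- (a - b)) ^ n < 1) sequentially"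
    by (rule order_tendstoD) simp
  then show ?thesis
  proof eventually_elim
    case (elim n)
    have "exp (- (a - b)) ^ n = exp (- (real n * a)) / exp (- (real n * b))"
      by (simp add: exp_of_nat_mult[symmetric] exp_diff[symmetric] algebra_simps)
    then have "N * exp (- (real n * a)) / exp (- (real n * b)) < 1"
      using elim by simp
    then show ?case
      by (simp add: divide_simps)
  qed
qed

lemma log_rate_le_iff:
  assumes "n > 0"
  shows "ereal (1 / real n) * eln p \<le> ereal (- c) \<longleftrightarrow> p \<le> exp (- (real n * c))"
proof (cases "p > 0")
  case True
  then have "ereal (1 / real n) * eln p \<le> ereal (- c) \<longleftrightarrow> ln p \<le> - (real n * c)"
    using assms by (simp add: eln_def divide_le_eq mult.commute)
  also have "\<dots> \<longleftrightarrow> p \<le> exp (- (real n * c))"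
    using True by (metis exp_le_cancel_iff exp_ln)
  finally show ?thesis .
next
  case False
  then show ?thesis
    using assms by (simp add: eln_def) (smt (verit) exp_gt_zero)
qed

lemma log_rate_less_iff:
  assumes "n > 0"
  shows "ereal (- c) < ereal (1 / real n) * eln p \<longleftrightarrow> exp (- (real n * c)) < p"
  using log_rate_le_iff[OF assms, of p c] by (simp add: not_le[symmetric])

lemma log_rate_ge_iff:
  assumes "n > 0"
  shows "ereal (- c) \<le> ereal (1 / real n) * eln p \<longleftrightarrow> exp (- (real n * c)) \<le> p"
proof (cases "p > 0")
  case True
  then have "ereal (- c) \<le> ereal (1 / real n) * eln p \<longleftrightarrow> - (real n * c) \<le> ln p"
    using assms by (simp add: eln_def le_divide_eq mult.commute)
  also have "\<dots> \<longleftrightarrow> exp (- (real n * c)) \<le> p"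
    using True by (simp add: ln_ge_iff)
  finally show ?thesis .
next
  case False
  then show ?thesis
    using assms by (simp add: eln_def) (smt (verit) exp_gt_zero)
qed

lemma limsup_log_rate_le:
  fixes P :: "nat \<Rightarrow> real" and x :: ereal
  assumes bound: "\<And>c. ereal c < x \<Longrightarrow> eventually (\<lambda>n. P n \<le> exp (- (real n * c))) sequentially"
  shows "limsup (\<lambda>n. ereal (1 / real n) * eln (P n)) \<le> - x"
  unfolding Limsup_le_iff
proof (intro allI impI)
  fix y assume "- x < y"
  then have "- y < x"
    by (simp add: ereal_uminus_less_reorder)
  then obtain c where c: "- y < ereal c" "ereal c < x"
    using ereal_dense2 by blast
  then have "ereal (- c) < y"
    by (metis ereal_uminus_less_reorder uminus_ereal.simps(1))
  from bound[OF c(2)] eventually_gt_at_top[of "0::nat"]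
  show "eventually (\<lambda>n. ereal (1 / real n) * eln (P n) < y) sequentially"
    by eventually_elim (use \<open>ereal (- c) < y\<close> log_rate_le_iff le_less_trans in metis)
qed

lemma liminf_log_rate_ge:
  fixes P :: "nat \<Rightarrow> real" and x :: ereal
  assumes bound: "\<And>c. x < ereal c \<Longrightarrow> eventually (\<lambda>n. exp (- (real n * c)) \<le> P n) sequentially"
  shows "- x \<le> liminf (\<lambda>n. ereal (1 / real n) * eln (P n))"
  unfolding le_Liminf_iff
proof (intro allI impI)
  fix y assume "y < - x"
  then have "x < - y"
    by (simp add: ereal_less_uminus_reorder)
  then obtain c where c: "x < ereal c" "ereal c < - y"
    using ereal_dense2 by blast
  then have "y < ereal (- c)"
    by (metis ereal_less_uminus_reorder uminus_ereal.simps(1))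
  from bound[OF c(1)] eventually_gt_at_top[of "0::nat"]
  show "eventually (\<lambda>n. y < ereal (1 / real n) * eln (P n)) sequentially"
    by eventually_elim (use \<open>y < ereal (- c)\<close> log_rate_ge_iff less_le_trans in metis)
qed

lemma compact_cover_eventually_measure_le_exp:
  fixes \<mu> :: "nat \<Rightarrow> 'a::metric_space measure"
  assumes sets_\<mu>: "\<And>n. sets (\<mu> n) = sets borel"
    and local: "\<And>y. y \<in> C \<Longrightarrow> \<exists>\<delta>>0.
      eventually (\<lambda>n. measure (\<mu> n) (ball y \<delta>) \<le> exp (- (real n * c))) sequentially"
    and C: "compact C"
  shows "\<exists>U N. open U \<and> C \<subseteq> U \<and>
    eventually (\<lambda>n. measure (\<mu> n) U \<le> N * exp (- (real n * c))) sequentially"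
proof -
  obtain \<delta> where \<delta>: "\<And>y. y \<in> C \<Longrightarrow> \<delta> y > 0"
    and ev\<delta>: "\<And>y. y \<in> C \<Longrightarrow>
      eventually (\<lambda>n. measure (\<mu> n) (ball y (\<delta> y)) \<le> exp (- (real n * c))) sequentially"
    using local by metis
  have "C \<subseteq> (\<Union>y\<in>C. ball y (\<delta> y))"
    using \<delta> by auto
  then obtain Y where Y: "Y \<subseteq> C" "finite Y" and cover: "C \<subseteq> (\<Union>y\<in>Y. ball y (\<delta> y))"
    using compactE_image[OF C, of C "\<lambda>y. ball y (\<delta> y)"] by auto
  have "eventually (\<lambda>n. \<forall>y\<in>Y. measure (\<mu> n) (ball y (\<delta> y)) \<le> exp (- (real n * c))) sequentially"
    using Y ev\<delta> by (auto intro!: eventually_ball_finite)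
  then have "eventually (\<lambda>n. measure (\<mu> n) (\<Union>y\<in>Y. ball y (\<delta> y)) \<le> real (card Y) * exp (- (real n * c)))
      sequentially"
  proof eventually_elim
    case (elim n)
    have "measure (\<mu> n) (\<Union>y\<in>Y. ball y (\<delta> y)) \<le> (\<Sum>y\<in>Y. measure (\<mu> n) (ball y (\<delta> y)))"
      using Y(2) by (intro measure_UNION_le) (auto simp: sets_\<mu>)
    also have "\<dots> \<le> real (card Y) * exp (- (real n * c))"
      using elim sum_mono[of Y "\<lambda>y. measure (\<mu> n) (ball y (\<delta> y))" "\<lambda>_. exp (- (real n * c))"] by simp
    finally show ?case .
  qed
  with cover show ?thesis
    by (intro exI[of _ "\<Union>y\<in>Y. ball y (\<delta> y)"] exI[of _ "real (card Y)"]) auto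
qed

lemma eventually_measure_closed_le_exp:
  fixes \<mu> :: "nat \<Rightarrow> 'a::metric_space measure" and I :: "'a \<Rightarrow> ereal"
  assumes sets_\<mu>: "\<And>n. sets (\<mu> n) = sets borel" and finite: "\<And>n. finite_measure (\<mu> n)"
    and tight: "\<And>c. \<exists>K. compact K \<and>
      eventually (\<lambda>n. measure (\<mu> n) (- K) \<le> exp (- (real n * c))) sequentially"
    and local: "\<And>y c. ereal c < I y \<Longrightarrow> \<exists>\<delta>>0.
      eventually (\<lambda>n. measure (\<mu> n) (ball y \<delta>) \<le> exp (- (real n * c))) sequentially"
    and F: "closed F" and c: "ereal c < (INF x\<in>F. I x)"
  shows "eventually (\<lambda>n. measure (\<mu> n) F \<le> exp (- (real n * c))) sequentially"
proof -
  obtain c' where "ereal c < ereal c'" and c'F: "ereal c' < (INF x\<in>F. I x)"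
    using ereal_dense2[OF c] by blast
  then have "c < c'"
    by simp
  obtain K where K: "compact K"
    and evK: "eventually (\<lambda>n. measure (\<mu> n) (- K) \<le> exp (- (real n * c'))) sequentially"
    using tight by blast
  have "ereal c' < I y" if "y \<in> F" for y
    using c'F INF_lower[OF that, of I] by (rule less_le_trans)
  then have "\<exists>\<delta>>0. eventually (\<lambda>n. measure (\<mu> n) (ball y \<delta>) \<le> exp (- (real n * c'))) sequentially"
    if "y \<in> F \<inter> K" for y
    using local that by blast
  from compact_cover_eventually_measure_le_exp[OF sets_\<mu> this closed_Int_compact[OF F K]]
  obtain U N where U: "open U" "F \<inter> K \<subseteq> U"
    and evU: "eventually (\<lambda>n. measure (\<mu> n) U \<le> N * exp (- (real n * c'))) sequentially"
    by blast
  have "eventually (\<lambda>n. (1 + N) * exp (- (real n * c')) \<le> exp (- (real n * c))) sequentially"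
    using \<open>c < c'\<close> by (rule eventually_mult_exp_le_exp)
  with evK evU show ?thesis
  proof eventually_elim
    case (elim n)
    interpret finite_measure "\<mu> n" by (rule finite)
    have sets: "- K \<in> sets (\<mu> n)" "U \<in> sets (\<mu> n)"
      using K U by (auto simp: sets_\<mu> intro: borel_open compact_imp_closed)
    have "F \<subseteq> - K \<union> U"
      using U by auto
    then have "measure (\<mu> n) F \<le> measure (\<mu> n) (- K) + measure (\<mu> n) U"
      using sets by (intro order.trans[OF finite_measure_mono measure_Un_le]) auto
    also have "\<dots> \<le> (1 + N) * exp (- (real n * c'))"
      using elim(1,2) by (simp add: algebra_simps)
    finally show ?case
      using elim(3) by linarith
  qed
qed

lemma LDP_if_eventually_exp_bounds:
  fixes \<mu> :: "nat \<Rightarrow> 'a::metric_space measure" and I :: "'a \<Rightarrow> ereal"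
  assumes sets_\<mu>: "\<And>n. sets (\<mu> n) = sets borel" and finite: "\<And>n. finite_measure (\<mu> n)"
    and upper: "\<And>F c. closed F \<Longrightarrow> ereal c < (INF x\<in>F. I x) \<Longrightarrow>
      eventually (\<lambda>n. measure (\<mu> n) F \<le> exp (- (real n * c))) sequentially"
    and lower: "\<And>y c e. I y < ereal c \<Longrightarrow> e > 0 \<Longrightarrow>
      eventually (\<lambda>n. exp (- (real n * c)) \<le> measure (\<mu> n) (ball y e)) sequentially"
  shows "LDP \<mu> I"
  unfolding LDP_def
proof (intro conjI allI impI)
  fix F :: "'a set" assume "closed F"
  then show "limsup (\<lambda>n. ereal (1 / real n) * eln (measure (\<mu> n) F)) \<le> - (INF x\<in>F. I x)"
    by (intro limsup_log_rate_le upper)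
next
  fix G :: "'a set" assume G: "open G"
  show "- (INF x\<in>G. I x) \<le> liminf (\<lambda>n. ereal (1 / real n) * eln (measure (\<mu> n) G))"
  proof (rule liminf_log_rate_ge)
    fix c assume "(INF x\<in>G. I x) < ereal c"
    then obtain y where y: "y \<in> G" "I y < ereal c"
      by (auto simp: INF_less_iff)
    then obtain e where e: "e > 0" "ball y e \<subseteq> G"
      using G open_contains_ball by blast
    from lower[OF y(2) e(1)]
    show "eventually (\<lambda>n. exp (- (real n * c)) \<le> measure (\<mu> n) G) sequentially"
    proof eventually_elim
      case (elim n)
      interpret finite_measure "\<mu> n" by (rule finite)
      have "measure (\<mu> n) (ball y e) \<le> measure (\<mu> n) G"
        using e G by (intro finite_measure_mono) (auto simp: sets_\<mu>)
      then show ?case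
        using elim by linarith
    qed
  qed
qed

lemma LDP_eventually_exp_less:
  assumes "LDP \<mu> I" and "open G" and "y \<in> G" and "I y < ereal c"
  shows "eventually (\<lambda>n. exp (- (real n * c)) < measure (\<mu> n) G) sequentially"
proof -
  have "(INF x\<in>G. I x) < ereal c"
    using assms(3,4) by (auto intro: le_less_trans INF_lower)
  then have "ereal (- c) < - (INF x\<in>G. I x)"
    by (subst ereal_less_uminus_reorder) simp
  also have "\<dots> \<le> liminf (\<lambda>n. ereal (1 / real n) * eln (measure (\<mu> n) G))"
    using assms(1,2) by (auto simp: LDP_def)
  finally have "eventually (\<lambda>n. ereal (- c) < ereal (1 / real n) * eln (measure (\<mu> n) G)) sequentially"
    by (rule less_LiminfD)
  with eventually_gt_at_top[of "0::nat"] show ?thesis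
    by eventually_elim (simp add: log_rate_less_iff)
qed

(* The library's indep_vars_sum only covers real-valued variables. *)
lemma (in prob_space) indep_var_sum:
  fixes X :: "'i \<Rightarrow> 'a \<Rightarrow> 'b::euclidean_space"
  assumes indep: "indep_vars (\<lambda>_. borel) X (insert i I)" and "finite I" "i \<notin> I"
  shows "indep_var borel (X i) borel (\<lambda>\<omega>. \<Sum>j\<in>I. X j \<omega>)"
proof -
  have "indep_var
    borel ((\<lambda>f. f i) \<circ> (\<lambda>\<omega>. restrict (\<lambda>j. X j \<omega>) {i}))
    borel ((\<lambda>f. \<Sum>j\<in>I. f j) \<circ> (\<lambda>\<omega>. restrict (\<lambda>j. X j \<omega>) I))"
    using assms by (intro indep_var_compose[OF indep_var_restrict[OF indep]]) auto
  also have "(\<lambda>f. \<Sum>j\<in>I. f j) \<circ> (\<lambda>\<omega>. restrict (\<lambda>j. X j \<omega>) I) = (\<lambda>\<omega>. \<Sum>j\<in>I. X j \<omega>)"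
    by (auto cong: sum.cong)
  finally show ?thesis
    by (simp add: comp_def)
qed

locale iid_sequence = prob_space M for M :: "'s measure" +
  fixes Z :: "nat \<Rightarrow> 's \<Rightarrow> 'a::euclidean_space"
  assumes indep: "indep_vars (\<lambda>_. borel) Z {1..}"
    and ident: "\<forall>i\<ge>1. distr M borel (Z i) = distr M borel (Z 1)"
begin

lemma Z_measurable: "1 \<le> i \<Longrightarrow> Z i \<in> borel_measurable M"
  using indep by (auto simp: indep_vars_def)

lemma nn_integral_prod_iid:
  fixes g :: "'a \<Rightarrow> ennreal"
  assumes g: "g \<in> borel_measurable borel" and J: "finite J" "J \<subseteq> {1..}"
  shows "(\<integral>\<^sup>+\<omega>. (\<Prod>i\<in>J. g (Z i \<omega>)) \<partial>M) = (\<integral>\<^sup>+\<omega>. g (Z 1 \<omega>) \<partial>M) ^ card J"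
proof -
  have "indep_vars (\<lambda>_. borel) (\<lambda>i \<omega>. g (Z i \<omega>)) J"
    using g by (intro indep_vars_compose2[OF indep_vars_subset[OF indep J(2)]]) auto
  then have "(\<integral>\<^sup>+\<omega>. (\<Prod>i\<in>J. g (Z i \<omega>)) \<partial>M) = (\<Prod>i\<in>J. \<integral>\<^sup>+\<omega>. g (Z i \<omega>) \<partial>M)"
    using J(1) by (intro indep_vars_nn_integral) auto
  also have "\<dots> = (\<Prod>i\<in>J. \<integral>\<^sup>+\<omega>. g (Z 1 \<omega>) \<partial>M)"
  proof (intro prod.cong refl)
    fix i assume "i \<in> J"
    then have i: "1 \<le> i"
      using J(2) by auto
    have "(\<integral>\<^sup>+\<omega>. g (Z i \<omega>) \<partial>M) = (\<integral>\<^sup>+x. g x \<partial>distr M borel (Z i))"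
      using Z_measurable[OF i] g by (simp add: nn_integral_distr)
    also have "\<dots> = (\<integral>\<^sup>+\<omega>. g (Z 1 \<omega>) \<partial>M)"
      using ident[rule_format, OF i] Z_measurable[of 1] g by (simp add: nn_integral_distr)
    finally show "(\<integral>\<^sup>+\<omega>. g (Z i \<omega>) \<partial>M) = (\<integral>\<^sup>+\<omega>. g (Z 1 \<omega>) \<partial>M)" .
  qed
  finally show ?thesis
    by simp
qed

lemma prob_sum_ge_le_chernoff:
  fixes f :: "'a \<Rightarrow> real"
  assumes f: "f \<in> borel_measurable borel"
    and mgf: "(\<integral>\<^sup>+\<omega>. ennreal (exp (f (Z 1 \<omega>))) \<partial>M) < \<infinity>"
    and J: "finite J" "J \<subseteq> {1..}"
    and A: "A \<subseteq> {\<omega>\<in>space M. t \<le> (\<Sum>i\<in>J. f (Z i \<omega>))}"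
  shows "prob A \<le> enn2real (\<integral>\<^sup>+\<omega>. ennreal (exp (f (Z 1 \<omega>))) \<partial>M) ^ card J * exp (- t)"
proof -
  define L where "L = (\<integral>\<^sup>+\<omega>. ennreal (exp (f (Z 1 \<omega>))) \<partial>M)"
  let ?E = "{\<omega>\<in>space M. t \<le> (\<Sum>i\<in>J. f (Z i \<omega>))}"
  have sum_measurable: "(\<lambda>\<omega>. \<Sum>i\<in>J. f (Z i \<omega>)) \<in> borel_measurable M"
    using Z_measurable J(2) f by (intro borel_measurable_sum) (auto intro: measurable_compose)
  have "ennreal (prob A) \<le> emeasure M ?E"
    using A sum_measurable by (simp add: emeasure_eq_measure[symmetric] emeasure_mono)
  also have "\<dots> = (\<integral>\<^sup>+\<omega>. indicator ?E \<omega> \<partial>M)"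
    using sum_measurable by simp
  also have "\<dots> \<le> (\<integral>\<^sup>+\<omega>. ennreal (exp (- t)) * (\<Prod>i\<in>J. ennreal (exp (f (Z i \<omega>)))) \<partial>M)"
  proof (intro nn_integral_mono)
    fix \<omega>
    have "(\<Prod>i\<in>J. ennreal (exp (f (Z i \<omega>)))) = ennreal (exp (\<Sum>i\<in>J. f (Z i \<omega>)))"
      using J(1) by (simp add: prod_ennreal exp_sum)
    then have "ennreal (exp (- t)) * (\<Prod>i\<in>J. ennreal (exp (f (Z i \<omega>))))
        = ennreal (exp ((\<Sum>i\<in>J. f (Z i \<omega>)) - t))"
      by (simp add: ennreal_mult[symmetric] exp_diff exp_minus field_simps)
    then show "indicator ?E \<omega> \<le> ennreal (exp (- t)) * (\<Prod>i\<in>J. ennreal (exp (f (Z i \<omega>))))"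
      by (simp add: indicator_def)
  qed
  also have "\<dots> = ennreal (exp (- t)) * (\<integral>\<^sup>+\<omega>. (\<Prod>i\<in>J. ennreal (exp (f (Z i \<omega>)))) \<partial>M)"
    using Z_measurable J(2) f
    by (intro nn_integral_cmult borel_measurable_prod_ennreal) (auto intro: measurable_compose)
  also have "\<dots> = ennreal (exp (- t)) * L ^ card J"
    using f unfolding L_def by (subst nn_integral_prod_iid[OF _ J]) simp_all
  also have "\<dots> = ennreal (enn2real L ^ card J * exp (- t))"
    using mgf by (simp add: L_def ennreal_mult ennreal_power[symmetric] mult.commute)
  finally show ?thesis
    unfolding L_def by (subst (asm) ennreal_le_iff) auto
qed

end

locale sublinear_iid_sums = iid_sequence +
  fixes \<phi> :: "nat \<Rightarrow> nat"
  assumes phi_pos: "\<forall>n>0. \<phi> n > 0"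
    and phi_lim: "(\<lambda>n. real (\<phi> n) / real n) \<longlonglongrightarrow> 0"
begin

definition Zbar where
  "Zbar n \<omega> = (1 / real n) *\<^sub>R (\<Sum>i=1..\<phi> n. Z i \<omega>)"

lemma Zbar_measurable: "Zbar n \<in> borel_measurable M"
  unfolding Zbar_def[abs_def] using Z_measurable
  by (intro borel_measurable_scaleR borel_measurable_const borel_measurable_sum) auto

lemma measure_law_Zbar:
  "B \<in> sets borel \<Longrightarrow> measure (distr M borel (Zbar n)) B = prob (Zbar n -` B \<inter> space M)"
  by (rule measure_distr[OF Zbar_measurable])

lemma eventually_prob_sum_ge_le:
  assumes f: "f \<in> borel_measurable borel"
    and mgf: "(\<integral>\<^sup>+\<omega>. ennreal (exp (f (Z 1 \<omega>))) \<partial>M) < \<infinity>"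
    and \<epsilon>: "\<epsilon> > 0"
  shows "eventually (\<lambda>n. \<forall>J t A. J \<subseteq> {1..\<phi> n} \<longrightarrow> A \<subseteq> {\<omega>\<in>space M. t \<le> (\<Sum>i\<in>J. f (Z i \<omega>))} \<longrightarrow>
      prob A \<le> exp (real n * \<epsilon> - t)) sequentially"
proof -
  define K where "K = max 1 (enn2real (\<integral>\<^sup>+\<omega>. ennreal (exp (f (Z 1 \<omega>))) \<partial>M))"
  have "eventually (\<lambda>n. K ^ \<phi> n \<le> exp (real n * \<epsilon>)) sequentially"
    using \<epsilon> by (intro eventually_power_le_exp_sublinear[OF phi_lim]) (simp_all add: K_def)
  then show ?thesis
  proof eventually_elim
    case (elim n)
    show ?case
    proof (intro allI impI)
      fix J t A
      assume J: "J \<subseteq> {1..\<phi> n}" and A: "A \<subseteq> {\<omega>\<in>space M. t \<le> (\<Sum>i\<in>J. f (Z i \<omega>))}"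
      have "prob A \<le> enn2real (\<integral>\<^sup>+\<omega>. ennreal (exp (f (Z 1 \<omega>))) \<partial>M) ^ card J * exp (- t)"
        using J by (intro prob_sum_ge_le_chernoff[OF f mgf _ _ A]) (auto intro: finite_subset)
      also have "\<dots> \<le> K ^ card J * exp (- t)"
        by (auto simp: K_def intro!: mult_right_mono power_mono)
      also have "\<dots> \<le> K ^ \<phi> n * exp (- t)"
        using card_mono[OF finite_atLeastAtMost J]
        by (intro mult_right_mono power_increasing) (auto simp: K_def)
      also have "\<dots> \<le> exp (real n * \<epsilon>) * exp (- t)"
        using elim by (intro mult_right_mono) auto
      finally show "prob A \<le> exp (real n * \<epsilon> - t)"
        by (simp add: exp_diff exp_minus field_simps)
    qed
  qed
qed

lemma eventually_prob_norm_scaled_sum_ge: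
  assumes \<alpha>: "\<alpha> > 0" and mgf: "(\<integral>\<^sup>+\<omega>. ennreal (exp (\<alpha> * norm (Z 1 \<omega>))) \<partial>M) < \<infinity>"
    and \<delta>: "\<delta> > 0"
  shows "eventually (\<lambda>n. \<forall>J \<subseteq> {1..\<phi> n}.
    prob {\<omega>\<in>space M. \<delta> \<le> norm ((1 / real n) *\<^sub>R (\<Sum>i\<in>J. Z i \<omega>))} \<le> exp (- (real n * (\<alpha> * \<delta> / 2))))
    sequentially"
proof -
  have "eventually (\<lambda>n. \<forall>J t A. J \<subseteq> {1..\<phi> n} \<longrightarrow>
      A \<subseteq> {\<omega>\<in>space M. t \<le> (\<Sum>i\<in>J. \<alpha> * norm (Z i \<omega>))} \<longrightarrow>
      prob A \<le> exp (real n * (\<alpha> * \<delta> / 2) - t)) sequentially"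
    using mgf \<alpha> \<delta> by (intro eventually_prob_sum_ge_le) auto
  then show ?thesis
    using eventually_gt_at_top[of "0::nat"]
  proof eventually_elim
    case (elim n)
    show ?case
    proof (intro allI impI)
      fix J assume J: "J \<subseteq> {1..\<phi> n}"
      have "{\<omega>\<in>space M. \<delta> \<le> norm ((1 / real n) *\<^sub>R (\<Sum>i\<in>J. Z i \<omega>))}
          \<subseteq> {\<omega>\<in>space M. \<alpha> * (real n * \<delta>) \<le> (\<Sum>i\<in>J. \<alpha> * norm (Z i \<omega>))}"
      proof safe
        fix \<omega> assume "\<delta> \<le> norm ((1 / real n) *\<^sub>R (\<Sum>i\<in>J. Z i \<omega>))"
        then have "real n * \<delta> \<le> norm (\<Sum>i\<in>J. Z i \<omega>)"
          using elim(2) by (simp add: pos_le_divide_eq mult.commute)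
        also have "\<dots> \<le> (\<Sum>i\<in>J. norm (Z i \<omega>))"
          by (rule norm_sum)
        finally show "\<alpha> * (real n * \<delta>) \<le> (\<Sum>i\<in>J. \<alpha> * norm (Z i \<omega>))"
          using \<alpha> by (simp add: sum_distrib_left[symmetric])
      qed
      then have "prob {\<omega>\<in>space M. \<delta> \<le> norm ((1 / real n) *\<^sub>R (\<Sum>i\<in>J. Z i \<omega>))}
          \<le> exp (real n * (\<alpha> * \<delta> / 2) - \<alpha> * (real n * \<delta>))"
        using elim(1) J by blast
      also have "\<dots> = exp (- (real n * (\<alpha> * \<delta> / 2)))"
        by (simp add: algebra_simps)
      finally show "prob {\<omega>\<in>space M. \<delta> \<le> norm ((1 / real n) *\<^sub>R (\<Sum>i\<in>J. Z i \<omega>))}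
          \<le> exp (- (real n * (\<alpha> * \<delta> / 2)))" .
    qed
  qed
qed

lemma Zbar_exponentially_tight:
  assumes \<alpha>: "\<alpha> > 0" and mgf: "(\<integral>\<^sup>+\<omega>. ennreal (exp (\<alpha> * norm (Z 1 \<omega>))) \<partial>M) < \<infinity>"
  shows "\<exists>K. compact K \<and>
    eventually (\<lambda>n. measure (distr M borel (Zbar n)) (- K) \<le> exp (- (real n * c))) sequentially"
proof -
  define R where "R = 2 * (\<bar>c\<bar> + 1) / \<alpha>"
  have R: "R > 0" and c: "c \<le> \<alpha> * R / 2"
    using \<alpha> by (simp_all add: R_def)
  from eventually_prob_norm_scaled_sum_ge[OF \<alpha> mgf R]
  have "eventually (\<lambda>n. measure (distr M borel (Zbar n)) (- cball 0 R) \<le> exp (- (real n * c))) sequentially"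
  proof eventually_elim
    case (elim n)
    have "{\<omega>\<in>space M. R \<le> norm (Zbar n \<omega>)} \<in> sets M"
      using Zbar_measurable by measurable
    then have "measure (distr M borel (Zbar n)) (- cball 0 R) \<le> prob {\<omega>\<in>space M. R \<le> norm (Zbar n \<omega>)}"
      by (subst measure_law_Zbar) (auto intro!: finite_measure_mono)
    also have "\<dots> \<le> exp (- (real n * (\<alpha> * R / 2)))"
      using elim[rule_format, of "{1..\<phi> n}"] by (simp add: Zbar_def)
    also have "\<dots> \<le> exp (- (real n * c))"
      using mult_left_mono[OF c, of "real n"] by simp
    finally show ?case .
  qed
  then show ?thesis
    by (intro exI[of _ "cball 0 R"]) auto
qed

lemma Zbar_ball_subset_halfspace:
  assumes "n > 0" and "norm \<theta> * \<delta> \<le> r"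
  shows "Zbar n -` ball y \<delta> \<inter> space M
    \<subseteq> {\<omega>\<in>space M. real n * (\<theta> \<bullet> y - r) \<le> (\<Sum>i\<in>{1..\<phi> n}. \<theta> \<bullet> Z i \<omega>)}"
proof safe
  fix \<omega> assume "\<omega> \<in> space M" and "Zbar n \<omega> \<in> ball y \<delta>"
  then have "norm (y - Zbar n \<omega>) < \<delta>"
    by (simp add: dist_norm)
  have "\<theta> \<bullet> (y - Zbar n \<omega>) \<le> norm \<theta> * norm (y - Zbar n \<omega>)"
    by (rule norm_cauchy_schwarz)
  also have "\<dots> \<le> norm \<theta> * \<delta>"
    using \<open>norm (y - Zbar n \<omega>) < \<delta>\<close> by (intro mult_left_mono) auto
  finally have "\<theta> \<bullet> y - r \<le> \<theta> \<bullet> Zbar n \<omega>"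
    using assms(2) by (simp add: inner_diff_right)
  also have "\<theta> \<bullet> Zbar n \<omega> = (\<Sum>i\<in>{1..\<phi> n}. \<theta> \<bullet> Z i \<omega>) / real n"
    by (simp add: Zbar_def inner_sum_right)
  finally show "real n * (\<theta> \<bullet> y - r) \<le> (\<Sum>i\<in>{1..\<phi> n}. \<theta> \<bullet> Z i \<omega>)"
    using assms(1) by (simp add: pos_le_divide_eq mult.commute)
qed

lemma Zbar_ball_upper:
  assumes "ereal c < support_fun y (mgf_domain M (Z 1))"
  shows "\<exists>\<delta>>0.
    eventually (\<lambda>n. measure (distr M borel (Zbar n)) (ball y \<delta>) \<le> exp (- (real n * c))) sequentially"
proof -
  obtain \<theta> where \<theta>: "\<theta> \<in> mgf_domain M (Z 1)" and c\<theta>: "c < y \<bullet> \<theta>"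
    using assms by (auto simp: support_fun_def less_SUP_iff)
  define \<eta> where "\<eta> = \<theta> \<bullet> y - c"
  define \<delta> where "\<delta> = \<eta> / 4 / (norm \<theta> + 1)"
  have \<eta>: "\<eta> > 0"
    using c\<theta> by (simp add: \<eta>_def inner_commute)
  then have \<delta>: "\<delta> > 0"
    unfolding \<delta>_def by (intro divide_pos_pos) (auto simp: add_nonneg_pos)
  have "norm \<theta> * \<delta> \<le> (norm \<theta> + 1) * \<delta>"
    using \<delta> by simp
  also have "\<dots> = \<eta> / 4"
    using add_nonneg_pos[OF norm_ge_zero[of \<theta>] zero_less_one] by (simp add: \<delta>_def field_simps)
  finally have \<theta>\<delta>: "norm \<theta> * \<delta> \<le> \<eta> / 4" .
  have "eventually (\<lambda>n. \<forall>J t A. J \<subseteq> {1..\<phi> n} \<longrightarrow>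
      A \<subseteq> {\<omega>\<in>space M. t \<le> (\<Sum>i\<in>J. \<theta> \<bullet> Z i \<omega>)} \<longrightarrow> prob A \<le> exp (real n * (\<eta> / 2) - t)) sequentially"
    using \<theta> \<eta> by (intro eventually_prob_sum_ge_le) (auto simp: mgf_domain_def)
  then have "eventually (\<lambda>n. measure (distr M borel (Zbar n)) (ball y \<delta>) \<le> exp (- (real n * c))) sequentially"
    using eventually_gt_at_top[of "0::nat"]
  proof eventually_elim
    case (elim n)
    have "prob (Zbar n -` ball y \<delta> \<inter> space M)
        \<le> exp (real n * (\<eta> / 2) - real n * (\<theta> \<bullet> y - \<eta> / 4))"
      using elim Zbar_ball_subset_halfspace[OF _ \<theta>\<delta>] by blast
    also have "\<dots> \<le> exp (- (real n * c))"
      using \<eta> mult_left_mono[of c "\<theta> \<bullet> y" "real n"] by (simp add: \<eta>_def algebra_simps)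
    finally show ?case
      by (simp add: measure_law_Zbar)
  qed
  with \<delta> show ?thesis
    by blast
qed

lemma indep_var_first_rest:
  "indep_var borel (\<lambda>\<omega>. (1 / real n) *\<^sub>R Z 1 \<omega>) borel (\<lambda>\<omega>. (1 / real n) *\<^sub>R (\<Sum>i=2..m. Z i \<omega>))"
proof -
  have "indep_vars (\<lambda>_. borel) Z (insert 1 {2..m})"
    by (rule indep_vars_subset[OF indep]) auto
  then have "indep_var borel (Z 1) borel (\<lambda>\<omega>. \<Sum>i=2..m. Z i \<omega>)"
    by (rule indep_var_sum) auto
  then have "indep_var borel ((\<lambda>x. (1 / real n) *\<^sub>R x) \<circ> Z 1)
      borel ((\<lambda>x. (1 / real n) *\<^sub>R x) \<circ> (\<lambda>\<omega>. \<Sum>i=2..m. Z i \<omega>))"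
    by (rule indep_var_compose) auto
  then show ?thesis
    by (simp add: comp_def)
qed

lemma Zbar_ball_ge_product:
  assumes "n > 0"
  shows "prob ((\<lambda>\<omega>. (1 / real n) *\<^sub>R Z 1 \<omega>) -` ball y \<delta> \<inter> space M)
      * prob ((\<lambda>\<omega>. (1 / real n) *\<^sub>R (\<Sum>i=2..\<phi> n. Z i \<omega>)) -` ball 0 \<delta> \<inter> space M)
    \<le> prob (Zbar n -` ball y (2 * \<delta>) \<inter> space M)"
proof -
  define U where "U = (\<lambda>\<omega>. (1 / real n) *\<^sub>R Z 1 \<omega>)"
  define W where "W = (\<lambda>\<omega>. (1 / real n) *\<^sub>R (\<Sum>i=2..\<phi> n. Z i \<omega>))"
  have "Zbar n \<omega> = U \<omega> + W \<omega>" for \<omega>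
    using phi_pos assms
    by (simp add: Zbar_def U_def W_def sum.atLeast_Suc_atMost numeral_2_eq_2 scaleR_add_right Suc_le_eq)
  then have "Zbar n \<omega> \<in> ball y (2 * \<delta>)" if "U \<omega> \<in> ball y \<delta>" "W \<omega> \<in> ball 0 \<delta>" for \<omega>
    using norm_diff_triangle_less[of y "U \<omega>" \<delta> "U \<omega> + W \<omega>" \<delta>] that by (simp add: dist_norm)
  then have "(\<lambda>\<omega>. (U \<omega>, W \<omega>)) -` (ball y \<delta> \<times> ball 0 \<delta>) \<inter> space M \<subseteq> Zbar n -` ball y (2 * \<delta>) \<inter> space M"
    by auto
  moreover have "indep_var borel U borel W"
    unfolding U_def W_def by (rule indep_var_first_rest)
  ultimately show ?thesis
    unfolding U_def[symmetric] W_def[symmetric] using Zbar_measurable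
    by (subst indep_varD[symmetric]) (auto intro!: finite_measure_mono)
qed

lemma eventually_prob_norm_rest_ge_le_half:
  assumes \<alpha>: "\<alpha> > 0" and mgf: "(\<integral>\<^sup>+\<omega>. ennreal (exp (\<alpha> * norm (Z 1 \<omega>))) \<partial>M) < \<infinity>"
    and \<delta>: "\<delta> > 0"
  shows "eventually (\<lambda>n.
    prob {\<omega>\<in>space M. \<delta> \<le> norm ((1 / real n) *\<^sub>R (\<Sum>i=2..\<phi> n. Z i \<omega>))} \<le> 1 / 2) sequentially"
proof -
  have "eventually (\<lambda>n. 2 * exp (- (real n * (\<alpha> * \<delta> / 2))) \<le> 1) sequentially"
    using eventually_mult_exp_le_exp[of 0 "\<alpha> * \<delta> / 2" 2] \<alpha> \<delta> by simp
  with eventually_prob_norm_scaled_sum_ge[OF \<alpha> mgf \<delta>] show ?thesis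
  proof eventually_elim
    case (elim n)
    have "{2..\<phi> n} \<subseteq> {1..\<phi> n}"
      by auto
    with elim(1) have "prob {\<omega>\<in>space M. \<delta> \<le> norm ((1 / real n) *\<^sub>R (\<Sum>i=2..\<phi> n. Z i \<omega>))}
        \<le> exp (- (real n * (\<alpha> * \<delta> / 2)))"
      by blast
    with elim(2) show ?case
      by linarith
  qed
qed

lemma Zbar_ball_lower:
  assumes \<alpha>: "\<alpha> > 0" and mgf: "(\<integral>\<^sup>+\<omega>. ennreal (exp (\<alpha> * norm (Z 1 \<omega>))) \<partial>M) < \<infinity>"
    and LDP_Z1: "LDP (\<lambda>n. distr M borel (\<lambda>\<omega>. (1 / real n) *\<^sub>R Z 1 \<omega>)) I"
    and "I y < ereal c" and e: "e > 0"
  shows "eventually (\<lambda>n. exp (- (real n * c)) \<le> measure (distr M borel (Zbar n)) (ball y e)) sequentially"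
proof -
  define W where "W n = (\<lambda>\<omega>. (1 / real n) *\<^sub>R (\<Sum>i=2..\<phi> n. Z i \<omega>))" for n
  obtain c' where "I y < ereal c'" and "ereal c' < ereal c"
    using ereal_dense2[OF \<open>I y < ereal c\<close>] by blast
  have first: "eventually (\<lambda>n. exp (- (real n * c')) <
      measure (distr M borel (\<lambda>\<omega>. (1 / real n) *\<^sub>R Z 1 \<omega>)) (ball y (e / 2))) sequentially"
    using e by (intro LDP_eventually_exp_less[OF LDP_Z1 _ _ \<open>I y < ereal c'\<close>]) auto
  have dom: "eventually (\<lambda>n. 2 * exp (- (real n * c)) \<le> exp (- (real n * c'))) sequentially"
    using \<open>ereal c' < ereal c\<close> by (intro eventually_mult_exp_le_exp) simp
  show ?thesis
    using first eventually_prob_norm_rest_ge_le_half[OF \<alpha> mgf half_gt_zero[OF e]] dom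
      eventually_gt_at_top[of "0::nat"]
  proof eventually_elim
    case (elim n)
    have "W n \<in> borel_measurable M"
      unfolding W_def using Z_measurable
      by (intro borel_measurable_scaleR borel_measurable_const borel_measurable_sum) auto
    then have "prob (space M - {\<omega>\<in>space M. e / 2 \<le> norm (W n \<omega>)})
        = 1 - prob {\<omega>\<in>space M. e / 2 \<le> norm (W n \<omega>)}"
      by (intro prob_compl) measurable
    also have "space M - {\<omega>\<in>space M. e / 2 \<le> norm (W n \<omega>)} = W n -` ball 0 (e / 2) \<inter> space M"
      by auto
    finally have rest_small: "1 / 2 \<le> prob (W n -` ball 0 (e / 2) \<inter> space M)"
      using elim(2) unfolding W_def by linarith
    have "exp (- (real n * c)) \<le> exp (- (real n * c')) / 2"
      using elim(3) by linarith
    also have "\<dots> \<le> prob ((\<lambda>\<omega>. (1 / real n) *\<^sub>R Z 1 \<omega>) -` ball y (e / 2) \<inter> space M) * (1 / 2)"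
      using elim(1) Z_measurable[of 1] by (simp add: measure_distr)
    also have "\<dots> \<le> prob ((\<lambda>\<omega>. (1 / real n) *\<^sub>R Z 1 \<omega>) -` ball y (e / 2) \<inter> space M)
        * prob (W n -` ball 0 (e / 2) \<inter> space M)"
      using rest_small by (intro mult_left_mono) simp_all
    also have "\<dots> \<le> prob (Zbar n -` ball y (2 * (e / 2)) \<inter> space M)"
      unfolding W_def using elim(4) by (rule Zbar_ball_ge_product)
    finally show ?case
      by (simp add: measure_law_Zbar)
  qed
qed

end

theorem lemma2p1:
  fixes M :: "'s measure" and Z :: "nat \<Rightarrow> 's \<Rightarrow> 'a::euclidean_space"
    and \<phi> :: "nat \<Rightarrow> nat" and I :: "'a \<Rightarrow> ereal"
  assumes "prob_space M"
    and phi_pos: "\<forall>n>0. \<phi> n > 0"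
    and phi_lim: "(\<lambda>n. real (\<phi> n) / real n) \<longlonglongrightarrow> 0"
    and indep: "prob_space.indep_vars M (\<lambda>_. borel) Z {1..}"
    and ident: "\<forall>i\<ge>1. distr M borel (Z i) = distr M borel (Z 1)"
    and A1_moment: "\<exists>\<alpha>>0. (\<integral>\<^sup>+ \<omega>. ennreal (exp (\<alpha> * norm (Z 1 \<omega>))) \<partial>M) < \<infinity>"
    and A1_good: "good_rate_function I"
    and A1_LDP: "LDP (\<lambda>n. distr M borel (\<lambda>\<omega>. (1 / real n) *\<^sub>R Z 1 \<omega>)) I"
    and A2: "\<forall>z. I z = support_fun z (mgf_domain M (Z 1))"
  shows "good_rate_function I \<and>
         LDP (\<lambda>n. distr M borel (\<lambda>\<omega>. (1 / real n) *\<^sub>R (\<Sum>i=1..\<phi> n. Z i \<omega>))) I"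
proof -
  interpret sublinear_iid_sums M Z \<phi>
    by (intro sublinear_iid_sums.intro iid_sequence.intro iid_sequence_axioms.intro
        sublinear_iid_sums_axioms.intro) fact+
  obtain \<alpha> where \<alpha>: "\<alpha> > 0" and mgf: "(\<integral>\<^sup>+\<omega>. ennreal (exp (\<alpha> * norm (Z 1 \<omega>))) \<partial>M) < \<infinity>"
    using A1_moment by blast
  have "LDP (\<lambda>n. distr M borel (Zbar n)) I"
  proof (rule LDP_if_eventually_exp_bounds)
    show "finite_measure (distr M borel (Zbar n))" for n
      by (rule finite_measure_distr[OF Zbar_measurable])
    have "\<exists>\<delta>>0. eventually (\<lambda>n. measure (distr M borel (Zbar n)) (ball y \<delta>) \<le> exp (- (real n * c))) sequentially"
      if "ereal c < I y" for y c
      using that A2 by (intro Zbar_ball_upper) simp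
    then show "eventually (\<lambda>n. measure (distr M borel (Zbar n)) F \<le> exp (- (real n * c))) sequentially"
      if "closed F" and "ereal c < (INF x\<in>F. I x)" for F c
      using that Zbar_exponentially_tight[OF \<alpha> mgf]
      by (intro eventually_measure_closed_le_exp[where I = I]) (auto intro: finite_measure_distr[OF Zbar_measurable])
  next
    show "eventually (\<lambda>n. exp (- (real n * c)) \<le> measure (distr M borel (Zbar n)) (ball y e)) sequentially"
      if "I y < ereal c" and "e > 0" for y c e
      using that by (rule Zbar_ball_lower[OF \<alpha> mgf A1_LDP])
  qed simp
  then show ?thesis
    using A1_good by (simp add: Zbar_def[abs_def])
qed

end
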